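(* Let $a\in\mathbb F^*$. For $g\in\mathcal D_a$ write $x^n-a=hg$ with $h\in\mathcal R$, let $g_0$ be the constant coefficient of $g$, put $\widehat h^{l}=\rho_l(\theta^{-n}(h))$, and define $\delta_a(g)=\theta^{-\deg(g)}(-a^{-1}g_0)\,\widehat h^{l}$. Define $\sigma_b:\mathcal D_b\to\mathcal T_b$, $g\mapsto \mathrm{im}\,M^\theta_b(\overline g)$ for $b\in\{a,a^{-1}\}$, and $\tau_a:\mathcal T_a\to\mathcal T_{a^{-1}}$, $\mathcal C\mapsto\mathcal C^\perp$. Then $\delta_a$ is a well-defined map $\mathcal D_a\to\mathcal D_{a^{-1}}$, the maps $\delta_a,\sigma_a,\sigma_{a^{-1}},\tau_a$ are all lattice anti-isomorphisms, and $\sigma_{a^{-1}}\circ\delta_a=\tau_a\circ\sigma_a$. In particular, if $\mathcal C=\mathrm{im}\,M^\theta_a(\overline g)$ for some $g\in\mathcal D_a$, then $\mathcal C^\perp=\mathrm{im}\,M^\theta_{a^{-1}}(\overline{\delta_a(g)})=\mathrm{im}\,M^\theta_{a^{-1}}(\overline{\widehat h^{l}})$.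
   Context: $\mathbb F$ is a finite field, $\theta\in\mathrm{Aut}(\mathbb F)$, and $\mathcal R=\mathbb F[x;\theta]$ is the skew polynomial ring: elements $\sum_i f_ix^i$ with $f_i\in\mathbb F$ on the left, usual addition, multiplication determined by $xb=\theta(b)x$. $\theta$ and its integer powers act on $\mathcal R$ (and on $\mathbb F$) coefficientwise. $g\mid_r f$ means $f=sg$ for some $s\in\mathcal R$. Fix $n\in\mathbb N$. For $b\in\mathbb F^*$, $\mathcal S_b=\mathcal R/\mathcal R(x^n-b)$ (left $\mathcal R$-module), $\overline f$ is the coset of $f$ (in $M^\theta_b(\overline f)$ taken in $\mathcal S_b$), $\mathfrak p_b:\mathbb F^n\to\mathcal S_b$, $(c_0,\dots,c_{n-1})\mapsto\overline{\sum c_ix^i}$, and $\mathfrak v_b=\mathfrak p_b^{-1}$. The $(\theta,b)$-circulant $M^\theta_b(\overline f)$ is the $n\times n$ matrix whose row with index $i$ ($0\le i\le n-1$) is $\mathfrak v_b(\overline{x^if})$; $\mathrm{im}$ denotes row space. A subspace $\mathcal C\subseteq\mathbb F^n$ is $(\theta,b)$-constacyclic if $\mathfrak p_b(\mathcal C)$ is a left $\mathcal R$-submodule of $\mathcal S_b$. $\mathcal D_b$ is the set of monic right divisors of $x^n-b$, ordered by right divisibility; $\mathcal T_b$ is the set of $(\theta,b)$-constacyclic codes in $\mathbb F^n$, ordered by inclusion. $\mathcal C^\perp$ is the dual with respect to the standard bilinear form on $\mathbb F^n$. For nonzero $f=\sum_{i=0}^tf_ix^i$ with $f_t\neq0$,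 $\rho_l(f)=\sum_{i=0}^t\theta^i(f_{t-i})x^i$. A lattice anti-isomorphism is an order-reversing bijection whose inverse is order-reversing. *)

theory Defs
  imports "HOL-Computational_Algebra.Polynomial"
begin

text \<open>Skew polynomials over a field are represented by their coefficient
  sequences, i.e. by the type 'a poly (used only as a container for
  coefficients, degree, addition); multiplication is the skew product
  determined by x b = theta(b) x.\<close>

definition field_aut :: "('a::field \<Rightarrow> 'a) \<Rightarrow> bool" where
  "field_aut \<theta> \<longleftrightarrow> bij \<theta> \<and> (\<forall>x y. \<theta> (x + y) = \<theta> x + \<theta> y) \<and> (\<forall>x y. \<theta> (x * y) = \<theta> x * \<theta> y)"

definition skew_mult :: "('a::field \<Rightarrow> 'a) \<Rightarrow> 'a poly \<Rightarrow> 'a poly \<Rightarrow> 'a poly" where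
  "skew_mult \<theta> f g = (\<Sum>i\<le>degree f. \<Sum>j\<le>degree g. monom (coeff f i * (\<theta> ^^ i) (coeff g j)) (i + j))"

definition rdvd :: "('a::field \<Rightarrow> 'a) \<Rightarrow> 'a poly \<Rightarrow> 'a poly \<Rightarrow> bool" where
  "rdvd \<theta> g f \<longleftrightarrow> (\<exists>s. f = skew_mult \<theta> s g)"

definition xnb :: "nat \<Rightarrow> 'a::field \<Rightarrow> 'a poly" where
  "xnb n b = monom 1 n - [:b:]"

text \<open>Canonical representative (remainder of degree < n) of the coset of f in S_b.\<close>
definition rmod :: "('a::field \<Rightarrow> 'a) \<Rightarrow> nat \<Rightarrow> 'a \<Rightarrow> 'a poly \<Rightarrow> 'a poly" where
  "rmod \<theta> n b f = (THE r. degree r < n \<and> rdvd \<theta> (xnb n b) (f - r))"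

text \<open>Vectors of F^n are functions nat => 'a vanishing from index n on.\<close>
definition Fn :: "nat \<Rightarrow> (nat \<Rightarrow> 'a::zero) set" where
  "Fn n = {v. \<forall>i\<ge>n. v i = 0}"

definition vec_of :: "('a::field \<Rightarrow> 'a) \<Rightarrow> nat \<Rightarrow> 'a \<Rightarrow> 'a poly \<Rightarrow> (nat \<Rightarrow> 'a)" where
  "vec_of \<theta> n b f = (\<lambda>i. if i < n then coeff (rmod \<theta> n b f) i else 0)"

definition poly_of_vec :: "nat \<Rightarrow> (nat \<Rightarrow> 'a::field) \<Rightarrow> 'a poly" where
  "poly_of_vec n c = (\<Sum>i<n. monom (c i) i)"

text \<open>(theta,b)-circulant matrix of the coset of f, given by its rows.\<close>
definition circ :: "('a::field \<Rightarrow> 'a) \<Rightarrow> nat \<Rightarrow> 'a \<Rightarrow> 'a poly \<Rightarrow> nat \<Rightarrow> (nat \<Rightarrow> 'a)" where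
  "circ \<theta> n b f = (\<lambda>i. vec_of \<theta> n b (skew_mult \<theta> (monom 1 i) f))"

definition rowspace :: "nat \<Rightarrow> (nat \<Rightarrow> nat \<Rightarrow> 'a::field) \<Rightarrow> (nat \<Rightarrow> 'a) set" where
  "rowspace n M = {(\<lambda>j. \<Sum>i<n. c i * M i j) | c. True}"

definition lin_subspace :: "nat \<Rightarrow> (nat \<Rightarrow> 'a::field) set \<Rightarrow> bool" where
  "lin_subspace n C \<longleftrightarrow> C \<subseteq> Fn n \<and> (\<lambda>_. 0) \<in> C \<and>
     (\<forall>u\<in>C. \<forall>v\<in>C. (\<lambda>i. u i + v i) \<in> C) \<and> (\<forall>c. \<forall>v\<in>C. (\<lambda>i. c * v i) \<in> C)"

text \<open>(theta,b)-constacyclic: p_b(C) is a left R-submodule of S_b.\<close>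
definition constacyclic :: "('a::field \<Rightarrow> 'a) \<Rightarrow> nat \<Rightarrow> 'a \<Rightarrow> (nat \<Rightarrow> 'a) set \<Rightarrow> bool" where
  "constacyclic \<theta> n b C \<longleftrightarrow> lin_subspace n C \<and>
     (\<forall>v\<in>C. \<forall>r. vec_of \<theta> n b (skew_mult \<theta> r (poly_of_vec n v)) \<in> C)"

definition Dset :: "('a::field \<Rightarrow> 'a) \<Rightarrow> nat \<Rightarrow> 'a \<Rightarrow> 'a poly set" where
  "Dset \<theta> n b = {g. lead_coeff g = 1 \<and> rdvd \<theta> g (xnb n b)}"

definition Tset :: "('a::field \<Rightarrow> 'a) \<Rightarrow> nat \<Rightarrow> 'a \<Rightarrow> (nat \<Rightarrow> 'a) set set" where
  "Tset \<theta> n b = {C. constacyclic \<theta> n b C}"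

definition dual :: "nat \<Rightarrow> (nat \<Rightarrow> 'a::field) set \<Rightarrow> (nat \<Rightarrow> 'a) set" where
  "dual n C = {u \<in> Fn n. \<forall>v\<in>C. (\<Sum>i<n. u i * v i) = 0}"

definition sigma :: "('a::field \<Rightarrow> 'a) \<Rightarrow> nat \<Rightarrow> 'a \<Rightarrow> 'a poly \<Rightarrow> (nat \<Rightarrow> 'a) set" where
  "sigma \<theta> n b g = rowspace n (circ \<theta> n b g)"

definition rho_l :: "('a::field \<Rightarrow> 'a) \<Rightarrow> 'a poly \<Rightarrow> 'a poly" where
  "rho_l \<theta> f = (\<Sum>i\<le>degree f. monom ((\<theta> ^^ i) (coeff f (degree f - i))) i)"

definition cofactor :: "('a::field \<Rightarrow> 'a) \<Rightarrow> nat \<Rightarrow> 'a \<Rightarrow> 'a poly \<Rightarrow> 'a poly" where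
  "cofactor \<theta> n a g = (THE h. xnb n a = skew_mult \<theta> h g)"

definition hhat :: "('a::field \<Rightarrow> 'a) \<Rightarrow> nat \<Rightarrow> 'a poly \<Rightarrow> 'a poly" where
  "hhat \<theta> n h = rho_l \<theta> (map_poly ((inv \<theta>) ^^ n) h)"

definition delta :: "('a::field \<Rightarrow> 'a) \<Rightarrow> nat \<Rightarrow> 'a \<Rightarrow> 'a poly \<Rightarrow> 'a poly" where
  "delta \<theta> n a g = smult (((inv \<theta>) ^^ degree g) (- inverse a * coeff g 0)) (hhat \<theta> n (cofactor \<theta> n a g))"

definition anti_iso :: "'x set \<Rightarrow> ('x \<Rightarrow> 'x \<Rightarrow> bool) \<Rightarrow> 'y set \<Rightarrow> ('y \<Rightarrow> 'y \<Rightarrow> bool) \<Rightarrow> ('x \<Rightarrow> 'y) \<Rightarrow> bool" where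
  "anti_iso A leA B leB f \<longleftrightarrow> bij_betw f A B \<and>
     (\<forall>x\<in>A. \<forall>y\<in>A. leA x y \<longrightarrow> leB (f y) (f x)) \<and>
     (\<forall>u\<in>B. \<forall>v\<in>B. leB u v \<longrightarrow> leA (inv_into A f v) (inv_into A f u))"

end

theory Submission
  imports Defs
begin

text \<open>If x^n - b = h g, the code of g consists of the coefficient vectors of the products r g
  with deg r < deg h. Hence monic right divisors of x^n - b correspond to constacyclic codes,
  divisibility becoming reverse inclusion; every constacyclic code arises in this way from the
  monic generator of a left ideal. The rows x^i hhat and x^j g of the two circulant matrices are
  orthogonal: their inner product is a twisted coefficient of g theta^(-n)(h), which equals
  x^n plus a constant. As delta(g) is hhat made monic and right divides x^n - b^(-1), its code
  lies in the dual of the code of g, and both have |F|^(deg g) elements, so they coincide.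
  Taking duals twice then shows that delta is an involution, and all four maps reverse order.\<close>

lemma anti_isoI:
  assumes "bij_betw f A B" and "\<And>x y. x \<in> A \<Longrightarrow> y \<in> A \<Longrightarrow> leA x y \<longleftrightarrow> leB (f y) (f x)"
  shows "anti_iso A leA B leB f"
  unfolding anti_iso_def
proof (intro conjI ballI impI)
  fix u v assume uv: "u \<in> B" "v \<in> B" "leB u v"
  have "f ` A = B" using assms(1) by (simp add: bij_betw_def)
  then show "leA (inv_into A f v) (inv_into A f u)"
    using assms(2)[of "inv_into A f v" "inv_into A f u"] uv by (simp add: inv_into_into f_inv_into_f)
qed (use assms in auto)

lemma subset_dual_dual: "C \<subseteq> Fn n \<Longrightarrow> C \<subseteq> dual n (dual n C)"
  by (auto simp: dual_def mult.commute)

lemma dual_antimono: "C \<subseteq> D \<Longrightarrow> dual n D \<subseteq> dual n C"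
  by (auto simp: dual_def)

section \<open>Skew polynomial arithmetic\<close>

locale skew_poly_ring =
  fixes \<theta> :: "'a::field \<Rightarrow> 'a"
  assumes field_aut: "field_aut \<theta>"
begin

abbreviation \<Theta> :: "nat \<Rightarrow> 'a \<Rightarrow> 'a" where "\<Theta> k \<equiv> \<theta> ^^ k"

abbreviation skew_times :: "'a poly \<Rightarrow> 'a poly \<Rightarrow> 'a poly" (infixl "\<star>" 70)
  where "f \<star> g \<equiv> skew_mult \<theta> f g"

lemma aut_add: "\<theta> (x + y) = \<theta> x + \<theta> y"
  and aut_mult: "\<theta> (x * y) = \<theta> x * \<theta> y"
  and inj_aut: "inj \<theta>"
  using field_aut by (auto simp: field_aut_def bij_is_inj)

lemma aut_0: "\<theta> 0 = 0"
  using aut_add[of 0 0] by (metis add_cancel_right_right)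

lemma aut_eq_0_iff: "\<theta> x = 0 \<longleftrightarrow> x = 0"
  using inj_aut aut_0 by (metis injD)

lemma aut_1: "\<theta> 1 = 1"
  using aut_mult[of 1 1] aut_eq_0_iff[of 1] by (metis mult_cancel_left1 one_neq_zero)

lemma aut_minus: "\<theta> (- x) = - \<theta> x"
  using aut_add[of x "- x"] aut_0 minus_unique[of "\<theta> x"] by simp

lemma aut_pow_add: "\<Theta> k (x + y) = \<Theta> k x + \<Theta> k y"
  by (induct k) (auto simp: aut_add)

lemma aut_pow_mult: "\<Theta> k (x * y) = \<Theta> k x * \<Theta> k y"
  by (induct k) (auto simp: aut_mult)

lemma aut_pow_eq_0_iff [simp]: "\<Theta> k x = 0 \<longleftrightarrow> x = 0"
  by (induct k) (auto simp: aut_eq_0_iff)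

lemma aut_pow_0 [simp]: "\<Theta> k 0 = 0"
  by simp

lemma aut_pow_1 [simp]: "\<Theta> k 1 = 1"
  by (induct k) (auto simp: aut_1)

lemma aut_pow_minus: "\<Theta> k (- x) = - \<Theta> k x"
  by (induct k) (auto simp: aut_minus)

lemma aut_pow_diff: "\<Theta> k (x - y) = \<Theta> k x - \<Theta> k y"
  by (metis aut_pow_add aut_pow_minus diff_conv_add_uminus)

lemma aut_pow_aut_pow: "\<Theta> i (\<Theta> j x) = \<Theta> (i + j) x"
  by (simp add: funpow_add)

lemma aut_pow_sum: "\<Theta> k (sum f A) = (\<Sum>a\<in>A. \<Theta> k (f a))"
  by (induct A rule: infinite_finite_induct) (auto simp: aut_pow_add)

lemma aut_pow_inj: "\<Theta> k x = \<Theta> k y \<Longrightarrow> x = y"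
  by (metis aut_pow_diff aut_pow_eq_0_iff eq_iff_diff_eq_0)

lemma coeff_skew_mult: "coeff (f \<star> g) k = (\<Sum>i\<le>k. coeff f i * \<Theta> i (coeff g (k - i)))"
proof -
  define c where "c i = coeff f i * \<Theta> i (coeff g (k - i))" for i
  have inner: "(\<Sum>j\<le>degree g. if i + j = k then coeff f i * \<Theta> i (coeff g j) else 0)
      = (if i \<le> k then c i else 0)" for i
  proof -
    have "(\<Sum>j\<le>degree g. if i + j = k then coeff f i * \<Theta> i (coeff g j) else 0)
        = (\<Sum>j\<le>degree g. if j = k - i then (if i \<le> k then c i else 0) else 0)"
      by (intro sum.cong) (auto simp: c_def)
    then show ?thesis
      by (auto simp: c_def coeff_eq_0)
  qed
  have "coeff (f \<star> g) k = (\<Sum>i\<le>degree f. if i \<le> k then c i else 0)"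
    by (simp add: skew_mult_def coeff_sum inner)
  also have "\<dots> = (\<Sum>i\<le>k. if i \<le> degree f then c i else 0)"
    by (simp add: sum.If_cases) (metis Int_commute atMost_def)
  also have "\<dots> = (\<Sum>i\<le>k. c i)"
    by (intro sum.cong) (auto simp: c_def coeff_eq_0)
  finally show ?thesis by (simp add: c_def)
qed

lemma skew_mult_0_left [simp]: "0 \<star> g = 0"
  and skew_mult_0_right [simp]: "f \<star> 0 = 0"
  by (simp_all add: poly_eq_iff coeff_skew_mult)

lemma skew_mult_add_left: "(f + g) \<star> h = f \<star> h + g \<star> h"
  by (simp add: poly_eq_iff coeff_skew_mult sum.distrib algebra_simps)

lemma skew_mult_add_right: "h \<star> (f + g) = h \<star> f + h \<star> g"
  by (simp add: poly_eq_iff coeff_skew_mult sum.distrib algebra_simps aut_pow_add)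

lemma skew_mult_minus_left: "(- f) \<star> h = - (f \<star> h)"
  by (simp add: poly_eq_iff coeff_skew_mult sum_negf)

lemma skew_mult_minus_right: "h \<star> (- f) = - (h \<star> f)"
  by (simp add: poly_eq_iff coeff_skew_mult sum_negf aut_pow_minus)

lemma skew_mult_diff_left: "(f - g) \<star> h = f \<star> h - g \<star> h"
  by (metis diff_conv_add_uminus skew_mult_add_left skew_mult_minus_left)

lemma skew_mult_diff_right: "h \<star> (f - g) = h \<star> f - h \<star> g"
  by (metis diff_conv_add_uminus skew_mult_add_right skew_mult_minus_right)

lemma skew_mult_smult_left: "smult c f \<star> g = smult c (f \<star> g)"
  by (simp add: poly_eq_iff coeff_skew_mult sum_distrib_left algebra_simps)

lemma skew_mult_sum_left: "(\<Sum>a\<in>A. f a) \<star> g = (\<Sum>a\<in>A. f a \<star> g)"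
  by (induct A rule: infinite_finite_induct) (auto simp: skew_mult_add_left)

lemma coeff_skew_mult_monom:
  "coeff (monom c i \<star> g) k = (if i \<le> k then c * \<Theta> i (coeff g (k - i)) else 0)"
proof -
  have "coeff (monom c i \<star> g) k = (\<Sum>j\<le>k. if j = i then c * \<Theta> i (coeff g (k - i)) else 0)"
    unfolding coeff_skew_mult by (rule sum.cong) auto
  then show ?thesis by simp
qed

lemma coeff_skew_mult_const_right: "coeff (f \<star> [:c:]) k = coeff f k * \<Theta> k c"
proof -
  have "coeff (f \<star> [:c:]) k = (\<Sum>i\<le>k. if i = k then coeff f k * \<Theta> k c else 0)"
    unfolding coeff_skew_mult by (rule sum.cong) (auto simp: coeff_pCons split: nat.splits)
  then show ?thesis by simp
qed

lemma skew_mult_const_left: "[:c:] \<star> g = smult c g"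
  using coeff_skew_mult_monom[of c 0 g] by (simp add: poly_eq_iff monom_0)

lemma skew_mult_1_left [simp]: "1 \<star> g = g"
  using skew_mult_const_left[of 1 g] by (simp add: one_pCons)

lemma monom_skew_mult: "monom c i \<star> g = smult c (monom 1 i \<star> g)"
  by (simp add: poly_eq_iff coeff_skew_mult_monom)

lemma monom_skew_mult_smult: "monom 1 i \<star> smult c f = smult (\<Theta> i c) (monom 1 i \<star> f)"
  by (simp add: poly_eq_iff coeff_skew_mult_monom aut_pow_mult)

lemma monom_skew_mult_commute: "monom 1 n \<star> f = map_poly (\<Theta> n) f \<star> monom 1 n"
proof (rule poly_eqI)
  fix k
  have "coeff (map_poly (\<Theta> n) f \<star> monom 1 n) k
      = (\<Sum>i\<le>k. if i = k - n then (if n \<le> k then \<Theta> n (coeff f (k - n)) else 0) else 0)"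
    unfolding coeff_skew_mult by (rule sum.cong) (auto simp: coeff_map_poly)
  then show "coeff (monom 1 n \<star> f) k = coeff (map_poly (\<Theta> n) f \<star> monom 1 n) k"
    by (simp add: coeff_skew_mult_monom)
qed

lemma skew_mult_assoc: "(f \<star> g) \<star> h = f \<star> (g \<star> h)"
proof (rule poly_eqI)
  fix k
  define A where "A a b c = coeff f a * \<Theta> a (coeff g b) * \<Theta> (a + b) (coeff h c)" for a b c
  have "coeff ((f \<star> g) \<star> h) k = (\<Sum>i\<le>k. \<Sum>a\<le>i. A a (i - a) (k - i))"
    by (simp add: coeff_skew_mult sum_distrib_right A_def mult.assoc aut_pow_sum aut_pow_mult
        aut_pow_aut_pow)
  also have "\<dots> = (\<Sum>(a, b)\<in>{(a, b). a + b \<le> k}. A a b (k - a - b))"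
    by (subst sum.triangle_reindex_eq) (auto intro!: sum.cong)
  also have "\<dots> = (\<Sum>a\<le>k. \<Sum>b\<le>k - a. A a b (k - a - b))"
  proof -
    have "{(a, b). a + b \<le> k} = Sigma {..k} (\<lambda>a. {..k - a})" by auto
    then show ?thesis by (simp add: sum.Sigma)
  qed
  also have "\<dots> = coeff (f \<star> (g \<star> h)) k"
    by (simp add: coeff_skew_mult sum_distrib_left A_def aut_pow_sum aut_pow_mult aut_pow_aut_pow
        mult.assoc diff_diff_add)
  finally show "coeff ((f \<star> g) \<star> h) k = coeff (f \<star> (g \<star> h)) k" .
qed

lemma map_poly_aut_pow_skew_mult:
  "map_poly (\<Theta> e) (f \<star> g) = map_poly (\<Theta> e) f \<star> map_poly (\<Theta> e) g"
  by (simp add: poly_eq_iff coeff_map_poly coeff_skew_mult aut_pow_sum aut_pow_mult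
      aut_pow_aut_pow add.commute)

lemma coeff_skew_mult_eq_0: "degree f + degree g < k \<Longrightarrow> coeff (f \<star> g) k = 0"
  unfolding coeff_skew_mult
proof (intro sum.neutral ballI)
  fix i assume "degree f + degree g < k" "i \<in> {..k}"
  then have "degree f < i \<or> degree g < k - i" by auto
  then show "coeff f i * \<Theta> i (coeff g (k - i)) = 0" by (auto simp: coeff_eq_0)
qed

lemma coeff_skew_mult_top:
  "coeff (f \<star> g) (degree f + degree g) = lead_coeff f * \<Theta> (degree f) (lead_coeff g)"
proof -
  let ?D = "degree f + degree g"
  have "coeff f i * \<Theta> i (coeff g (?D - i)) = 0" if "i \<noteq> degree f" for i
  proof -
    from that have "degree f < i \<or> degree g < ?D - i" by auto
    then show ?thesis by (auto simp: coeff_eq_0)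
  qed
  then have "coeff (f \<star> g) ?D
      = (\<Sum>i\<le>?D. if i = degree f then lead_coeff f * \<Theta> (degree f) (lead_coeff g) else 0)"
    unfolding coeff_skew_mult by (intro sum.cong) auto
  then show ?thesis by simp
qed

lemma degree_skew_mult: "f \<noteq> 0 \<Longrightarrow> g \<noteq> 0 \<Longrightarrow> degree (f \<star> g) = degree f + degree g"
  by (rule order.antisym)
    (auto intro!: degree_le le_degree simp: coeff_skew_mult_eq_0 coeff_skew_mult_top)

lemma lead_coeff_skew_mult:
  "f \<noteq> 0 \<Longrightarrow> g \<noteq> 0 \<Longrightarrow> lead_coeff (f \<star> g) = lead_coeff f * \<Theta> (degree f) (lead_coeff g)"
  by (simp add: degree_skew_mult coeff_skew_mult_top)

lemma skew_mult_eq_0_iff: "f \<star> g = 0 \<longleftrightarrow> f = 0 \<or> g = 0"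
  using coeff_skew_mult_top[of f g] by (cases "f = 0 \<or> g = 0") auto

lemma skew_mult_right_cancel: "g \<noteq> 0 \<Longrightarrow> f \<star> g = f' \<star> g \<Longrightarrow> f = f'"
  by (metis eq_iff_diff_eq_0 skew_mult_diff_left skew_mult_eq_0_iff)

lemma skew_div_exists:
  assumes "g \<noteq> 0"
  shows "\<exists>q r. f = q \<star> g + r \<and> (r = 0 \<or> degree r < degree g)"
proof (induction "degree f" arbitrary: f rule: less_induct)
  case less
  show ?case
  proof (cases "f = 0 \<or> degree f < degree g")
    case True
    then show ?thesis by (intro exI[of _ 0] exI[of _ f]) auto
  next
    case False
    then have dg: "degree g \<le> degree f" by auto
    define e where "e = degree f - degree g"
    define c where "c = lead_coeff f / \<Theta> e (lead_coeff g)"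
    define f' where "f' = f - monom c e \<star> g"
    have "coeff f' k = 0" if "degree f \<le> k" for k
      using that dg assms by (cases "k = degree f")
        (auto simp: f'_def coeff_skew_mult_monom e_def c_def coeff_eq_0)
    then have "f' = 0 \<or> degree f' < degree f"
      by (metis leading_coeff_0_iff not_le)
    then show ?thesis
    proof
      assume "f' = 0"
      then show ?thesis by (intro exI[of _ "monom c e"] exI[of _ 0]) (simp add: f'_def)
    next
      assume "degree f' < degree f"
      from less[OF this] obtain q r where "f' = q \<star> g + r" "r = 0 \<or> degree r < degree g"
        by blast
      then show ?thesis
        by (intro exI[of _ "q + monom c e"] exI[of _ r])
          (auto simp: f'_def skew_mult_add_left algebra_simps)
    qed
  qed
qed

lemma skew_div_unique:
  assumes "g \<noteq> 0" and eq: "q \<star> g + r = q' \<star> g + r'"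
    and "r = 0 \<or> degree r < degree g" and "r' = 0 \<or> degree r' < degree g"
  shows "q = q'" and "r = r'"
proof -
  have qr: "(q - q') \<star> g = r' - r"
    using eq by (simp add: skew_mult_diff_left algebra_simps)
  have "r' - r = 0 \<or> degree (r' - r) < degree g"
    using assms(3,4) degree_diff_le_max[of r' r] by auto
  moreover have "r' - r \<noteq> 0 \<and> degree g \<le> degree (r' - r)" if "q \<noteq> q'"
    using that qr assms(1) degree_skew_mult[of "q - q'" g] skew_mult_eq_0_iff[of "q - q'" g]
    by auto
  ultimately show "q = q'" by fastforce
  then show "r = r'" using eq by simp
qed

lemma left_ideal_monic_generator:
  assumes mult_closed: "\<And>s f. f \<in> I \<Longrightarrow> s \<star> f \<in> I"
    and diff_closed: "\<And>f f'. f \<in> I \<Longrightarrow> f' \<in> I \<Longrightarrow> f - f' \<in> I"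
    and "f\<^sub>0 \<in> I" "f\<^sub>0 \<noteq> 0"
  obtains g where "lead_coeff g = 1" "g \<in> I" "\<And>f. f \<in> I \<Longrightarrow> \<exists>q. f = q \<star> g"
proof -
  obtain g\<^sub>0 where g\<^sub>0: "g\<^sub>0 \<in> I" "g\<^sub>0 \<noteq> 0"
    and min: "\<And>f. f \<in> I \<Longrightarrow> f \<noteq> 0 \<Longrightarrow> degree g\<^sub>0 \<le> degree f"
    using ex_has_least_nat[of "\<lambda>f. f \<in> I \<and> f \<noteq> 0" f\<^sub>0 degree] assms(3,4) by blast
  define g where "g = smult (inverse (lead_coeff g\<^sub>0)) g\<^sub>0"
  have "g \<in> I"
    using mult_closed[OF g\<^sub>0(1), of "[:inverse (lead_coeff g\<^sub>0):]"]
    by (simp add: g_def skew_mult_const_left)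
  moreover have "lead_coeff g = 1" "degree g = degree g\<^sub>0"
    using g\<^sub>0(2) by (simp_all add: g_def)
  moreover have "\<exists>q. f = q \<star> g" if "f \<in> I" for f
  proof -
    obtain q r where qr: "f = q \<star> g + r" "r = 0 \<or> degree r < degree g"
      using skew_div_exists[of g f] \<open>lead_coeff g = 1\<close> by force
    have "r \<in> I"
      using diff_closed[OF that mult_closed[OF \<open>g \<in> I\<close>, of q]] qr(1) by simp
    then have "r = 0"
      using qr(2) min[of r] \<open>degree g = degree g\<^sub>0\<close> by linarith
    then show ?thesis using qr(1) by auto
  qed
  ultimately show ?thesis using that by blast
qed

end

definition polys_below :: "nat \<Rightarrow> 'a::zero poly set" where
  "polys_below m = {r. \<forall>i\<ge>m. coeff r i = 0}"

lemma mem_polys_below_iff: "r \<in> polys_below m \<longleftrightarrow> r = 0 \<or> degree r < m"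
proof
  assume "r \<in> polys_below m"
  then show "r = 0 \<or> degree r < m"
    using leading_coeff_0_iff[of r] by (cases "r = 0") (auto simp: polys_below_def not_less[symmetric])
qed (auto simp: polys_below_def coeff_eq_0)

lemma polys_below_zero [simp]: "0 \<in> polys_below m"
  and polys_below_add: "r \<in> polys_below m \<Longrightarrow> s \<in> polys_below m \<Longrightarrow> r + s \<in> polys_below m"
  and polys_below_smult: "r \<in> polys_below m \<Longrightarrow> smult c r \<in> polys_below m"
  by (simp_all add: polys_below_def)

lemma finite_Fn: "finite (Fn n :: (nat \<Rightarrow> 'a::{zero,finite}) set)"
proof -
  have "Fn n = {f :: nat \<Rightarrow> 'a. \<forall>x. (x \<in> {..<n} \<longrightarrow> f x \<in> UNIV) \<and> (x \<notin> {..<n} \<longrightarrow> f x = 0)}"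
    unfolding Fn_def by auto
  then show ?thesis
    using finite_set_of_finite_funs[of "{..<n}" "UNIV :: 'a set" 0] by simp
qed

lemma finite_polys_below: "finite (polys_below m :: 'a::{zero,finite} poly set)"
proof (rule finite_imageD)
  have "coeff ` (polys_below m :: 'a poly set) \<subseteq> Fn m"
    by (auto simp: polys_below_def Fn_def)
  then show "finite (coeff ` (polys_below m :: 'a poly set))"
    using finite_Fn finite_subset by blast
  show "inj_on coeff (polys_below m)"
    by (simp add: inj_on_def coeff_inject)
qed

lemma coeff_poly_of_vec: "coeff (poly_of_vec n c) k = (if k < n then c k else 0)"
  by (simp add: poly_of_vec_def coeff_sum)

lemma poly_of_vec_coeff: "r \<in> polys_below n \<Longrightarrow> poly_of_vec n (coeff r) = r"
  by (rule poly_eqI) (auto simp: coeff_poly_of_vec polys_below_def)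

section \<open>Codes of right divisors of x^n - b\<close>

locale skew_constacyclic = skew_poly_ring +
  fixes n :: nat and b :: 'a
  assumes n_pos: "1 \<le> n" and b_nonzero: "b \<noteq> 0"
begin

lemma coeff_xnb: "coeff (xnb n b) k = (if k = n then 1 else if k = 0 then - b else 0)"
  using n_pos by (auto simp: xnb_def coeff_pCons split: nat.splits)

lemma degree_xnb [simp]: "degree (xnb n b) = n"
  by (auto intro!: order.antisym degree_le le_degree simp: coeff_xnb)

lemma xnb_nonzero [simp]: "xnb n b \<noteq> 0"
  using n_pos degree_xnb by (metis degree_0 not_one_le_zero)

lemma remainder_unique:
  assumes "degree r < n" "f - r = s \<star> xnb n b" "degree r' < n" "f - r' = s' \<star> xnb n b"
  shows "r = r'"
proof -
  have "s \<star> xnb n b + r = s' \<star> xnb n b + r'"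
    using assms(2,4) by (metis diff_add_cancel)
  then show ?thesis
    using skew_div_unique(2)[of "xnb n b"] assms(1,3) by auto
qed

lemma rmod_spec: "degree (rmod \<theta> n b f) < n \<and> rdvd \<theta> (xnb n b) (f - rmod \<theta> n b f)"
proof -
  obtain q r where "f = q \<star> xnb n b + r" "r = 0 \<or> degree r < n"
    using skew_div_exists[of "xnb n b" f] by auto
  then have r: "degree r < n \<and> (\<exists>s. f - r = s \<star> xnb n b)"
    using n_pos by auto
  show ?thesis
    unfolding rmod_def rdvd_def by (rule theI[of _ r]) (use r remainder_unique in blast)+
qed

lemma rmod_eqI: "degree r < n \<Longrightarrow> f - r = s \<star> xnb n b \<Longrightarrow> rmod \<theta> n b f = r"
  using rmod_spec[of f] remainder_unique unfolding rdvd_def by blast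

lemma rmod_eq_self: "degree f < n \<Longrightarrow> rmod \<theta> n b f = f"
  by (rule rmod_eqI[of _ _ 0]) auto

lemma rmod_diff_rdvd: "\<exists>s. f - rmod \<theta> n b f = s \<star> xnb n b"
  using rmod_spec unfolding rdvd_def by blast

lemma rmod_add: "rmod \<theta> n b (f + g) = rmod \<theta> n b f + rmod \<theta> n b g"
proof -
  obtain s t where "f - rmod \<theta> n b f = s \<star> xnb n b" "g - rmod \<theta> n b g = t \<star> xnb n b"
    using rmod_diff_rdvd by metis
  moreover have "degree (rmod \<theta> n b f + rmod \<theta> n b g) < n"
    using rmod_spec[of f] rmod_spec[of g] degree_add_le_max[of "rmod \<theta> n b f" "rmod \<theta> n b g"]
    by linarith
  ultimately show ?thesis
    by (intro rmod_eqI[of _ _ "s + t"]) (auto simp: skew_mult_add_left algebra_simps)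
qed

lemma rmod_smult: "rmod \<theta> n b (smult c f) = smult c (rmod \<theta> n b f)"
proof -
  obtain s where "f - rmod \<theta> n b f = s \<star> xnb n b" using rmod_diff_rdvd by metis
  moreover have "degree (smult c (rmod \<theta> n b f)) < n"
    using rmod_spec[of f] degree_smult_le[of c "rmod \<theta> n b f"] by linarith
  ultimately show ?thesis
    by (intro rmod_eqI[of _ _ "smult c s"])
      (auto simp: skew_mult_smult_left simp flip: smult_diff_right)
qed

lemma rmod_0 [simp]: "rmod \<theta> n b 0 = 0"
  using rmod_eq_self[of 0] n_pos by simp

lemma rmod_sum: "rmod \<theta> n b (\<Sum>a\<in>A. f a) = (\<Sum>a\<in>A. rmod \<theta> n b (f a))"
  by (induct A rule: infinite_finite_induct) (auto simp: rmod_add)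

lemma rmod_add_multiple: "rmod \<theta> n b (s \<star> xnb n b + f) = rmod \<theta> n b f"
proof -
  obtain t where "f - rmod \<theta> n b f = t \<star> xnb n b" using rmod_diff_rdvd by metis
  then show ?thesis
    by (intro rmod_eqI[of _ _ "s + t"]) (auto simp: rmod_spec skew_mult_add_left algebra_simps)
qed

lemma rmod_skew_mult_rmod: "rmod \<theta> n b (s \<star> rmod \<theta> n b f) = rmod \<theta> n b (s \<star> f)"
proof -
  obtain t where "f - rmod \<theta> n b f = t \<star> xnb n b" using rmod_diff_rdvd by metis
  then have "s \<star> f = (s \<star> t) \<star> xnb n b + s \<star> rmod \<theta> n b f"
    by (metis diff_add_cancel skew_mult_add_right skew_mult_assoc)
  then show ?thesis by (simp add: rmod_add_multiple)
qed

lemma vec_of_eq_coeff_rmod: "vec_of \<theta> n b f = coeff (rmod \<theta> n b f)"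
  using rmod_spec[of f] by (auto simp: vec_of_def fun_eq_iff coeff_eq_0)

lemma
  assumes "xnb n b = h \<star> g"
  shows factor_nonzero: "h \<noteq> 0" "g \<noteq> 0"
    and factor_degree: "degree h + degree g = n"
    and factor_lead_coeff: "lead_coeff h * \<Theta> (degree h) (lead_coeff g) = 1"
    and factor_coeff_0: "coeff h 0 * coeff g 0 = - b"
proof -
  show h: "h \<noteq> 0" and g: "g \<noteq> 0" using assms xnb_nonzero skew_mult_eq_0_iff by metis+
  show "degree h + degree g = n"
    using degree_skew_mult[OF h g] by (simp flip: assms)
  show "lead_coeff h * \<Theta> (degree h) (lead_coeff g) = 1"
    using lead_coeff_skew_mult[OF h g] by (simp flip: assms add: coeff_xnb)
  show "coeff h 0 * coeff g 0 = - b"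
    using arg_cong[OF assms, of "\<lambda>p. coeff p 0"] n_pos by (simp add: coeff_skew_mult coeff_xnb)
qed

lemma factor_monic: "lead_coeff g = 1 \<Longrightarrow> xnb n b = h \<star> g \<Longrightarrow> lead_coeff h = 1"
  using factor_lead_coeff by (metis aut_pow_1 mult.right_neutral)

lemma Dset_iff: "g \<in> Dset \<theta> n b \<longleftrightarrow> lead_coeff g = 1 \<and> (\<exists>h. xnb n b = h \<star> g)"
  by (auto simp: Dset_def rdvd_def)

lemma DsetE:
  assumes "g \<in> Dset \<theta> n b"
  obtains h where "lead_coeff g = 1" "xnb n b = h \<star> g"
  using assms by (auto simp: Dset_iff)

lemma degree_skew_mult_factor_less:
  assumes "xnb n b = h \<star> g" "r \<in> polys_below (degree h)"
  shows "degree (r \<star> g) < n"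
proof (cases "r = 0")
  case False
  then show ?thesis
    using assms degree_skew_mult[OF False factor_nonzero(2)[OF assms(1)]] factor_degree[OF assms(1)]
    by (simp add: mem_polys_below_iff)
qed (use n_pos in auto)

lemma rmod_skew_mult_factor:
  assumes "xnb n b = h \<star> g"
  obtains r' where "r' \<in> polys_below (degree h)" "rmod \<theta> n b (r \<star> g) = r' \<star> g"
proof -
  obtain q r' where qr: "r = q \<star> h + r'" "r' = 0 \<or> degree r' < degree h"
    using skew_div_exists[OF factor_nonzero(1)[OF assms]] by blast
  then have r': "r' \<in> polys_below (degree h)" by (simp add: mem_polys_below_iff)
  have "r \<star> g = q \<star> xnb n b + r' \<star> g"
    using qr assms by (simp add: skew_mult_add_left skew_mult_assoc)
  then have "rmod \<theta> n b (r \<star> g) = r' \<star> g"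
    using rmod_add_multiple rmod_eq_self[OF degree_skew_mult_factor_less[OF assms r']] by simp
  then show ?thesis using that r' by blast
qed

lemma circ_combination:
  "(\<lambda>j. \<Sum>i<n. c i * circ \<theta> n b g i j) = coeff (rmod \<theta> n b (poly_of_vec n c \<star> g))"
proof -
  have "poly_of_vec n c \<star> g = (\<Sum>i<n. smult (c i) (monom 1 i \<star> g))"
    unfolding poly_of_vec_def skew_mult_sum_left by (intro sum.cong refl monom_skew_mult)
  then show ?thesis
    by (simp add: rmod_sum rmod_smult coeff_sum circ_def vec_of_eq_coeff_rmod fun_eq_iff)
qed

lemma sigma_eq_image:
  assumes "xnb n b = h \<star> g"
  shows "sigma \<theta> n b g = (\<lambda>r. coeff (r \<star> g)) ` polys_below (degree h)"
proof (intro equalityI subsetI)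
  fix v assume "v \<in> sigma \<theta> n b g"
  then obtain c where v: "v = coeff (rmod \<theta> n b (poly_of_vec n c \<star> g))"
    by (auto simp: sigma_def rowspace_def circ_combination)
  obtain r where "r \<in> polys_below (degree h)" "rmod \<theta> n b (poly_of_vec n c \<star> g) = r \<star> g"
    by (rule rmod_skew_mult_factor[OF assms])
  then show "v \<in> (\<lambda>r. coeff (r \<star> g)) ` polys_below (degree h)"
    using v by auto
next
  fix v assume "v \<in> (\<lambda>r. coeff (r \<star> g)) ` polys_below (degree h)"
  then obtain r where r: "r \<in> polys_below (degree h)" "v = coeff (r \<star> g)" by auto
  have "r \<in> polys_below n"
    using r(1) factor_degree[OF assms] by (auto simp: polys_below_def)
  then have "v = (\<lambda>j. \<Sum>i<n. coeff r i * circ \<theta> n b g i j)"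
    using r rmod_eq_self[OF degree_skew_mult_factor_less[OF assms r(1)]]
    by (simp add: circ_combination poly_of_vec_coeff)
  then show "v \<in> sigma \<theta> n b g" by (auto simp: sigma_def rowspace_def)
qed

lemma coeff_rmod_mem_sigma:
  assumes "xnb n b = h \<star> g"
  shows "coeff (rmod \<theta> n b (r \<star> g)) \<in> sigma \<theta> n b g"
proof -
  obtain r' where "r' \<in> polys_below (degree h)" "rmod \<theta> n b (r \<star> g) = r' \<star> g"
    by (rule rmod_skew_mult_factor[OF assms])
  then show ?thesis by (simp add: sigma_eq_image[OF assms])
qed

lemma sigma_mem_Tset:
  assumes fac: "xnb n b = h \<star> g"
  shows "sigma \<theta> n b g \<in> Tset \<theta> n b"
proof -
  note S = sigma_eq_image[OF fac]
  have vanish: "coeff (r \<star> g) i = 0" if "r \<in> polys_below (degree h)" "n \<le> i" for r i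
    using degree_skew_mult_factor_less[OF fac that(1)] that(2) by (simp add: coeff_eq_0)
  have "sigma \<theta> n b g \<subseteq> Fn n"
    using vanish by (auto simp: S Fn_def)
  moreover have "(\<lambda>_. 0) \<in> sigma \<theta> n b g"
    unfolding S by (rule image_eqI[of _ _ 0]) auto
  moreover have "(\<lambda>i. u i + v i) \<in> sigma \<theta> n b g"
    if "u \<in> sigma \<theta> n b g" "v \<in> sigma \<theta> n b g" for u v
    using that unfolding S
    by (auto intro!: image_eqI[of _ _ "_ + _"] polys_below_add simp: skew_mult_add_left)
  moreover have "(\<lambda>i. c * v i) \<in> sigma \<theta> n b g" if "v \<in> sigma \<theta> n b g" for c v
    using that unfolding S
    by (auto intro!: image_eqI[of _ _ "smult c _"] polys_below_smult simp: skew_mult_smult_left)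
  moreover have "vec_of \<theta> n b (s \<star> poly_of_vec n v) \<in> sigma \<theta> n b g"
    if v: "v \<in> sigma \<theta> n b g" for v s
  proof -
    obtain r where r: "r \<in> polys_below (degree h)" "v = coeff (r \<star> g)"
      using v unfolding S by auto
    have "r \<star> g \<in> polys_below n"
      using vanish[OF r(1)] by (simp add: polys_below_def)
    then have "poly_of_vec n v = r \<star> g" using r(2) poly_of_vec_coeff by blast
    then show ?thesis
      using coeff_rmod_mem_sigma[OF fac, of "s \<star> r"]
      by (simp add: vec_of_eq_coeff_rmod skew_mult_assoc)
  qed
  ultimately show ?thesis
    by (simp add: Tset_def constacyclic_def lin_subspace_def)
qed

lemma monic_factor_eq:
  assumes "lead_coeff g = 1" "lead_coeff g' = 1" "g' = s \<star> g" "degree g' \<le> degree g"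
  shows "g' = g"
proof -
  have nz: "g \<noteq> 0" "s \<noteq> 0" using assms(1-3) by auto
  have "degree s = 0" "lead_coeff s = 1"
    using degree_skew_mult[OF nz(2,1)] lead_coeff_skew_mult[OF nz(2,1)] assms by simp_all
  then have "s = 1" using degree_0_id[of s] by (simp add: one_pCons)
  then show ?thesis using assms(3) by simp
qed

lemma rdvd_iff_sigma_subset:
  assumes fac: "xnb n b = h \<star> g" and fac': "xnb n b = h' \<star> g'" and "lead_coeff h' = 1"
  shows "rdvd \<theta> g g' \<longleftrightarrow> sigma \<theta> n b g' \<subseteq> sigma \<theta> n b g"
proof
  assume "rdvd \<theta> g g'"
  then obtain s where s: "g' = s \<star> g" by (auto simp: rdvd_def)
  show "sigma \<theta> n b g' \<subseteq> sigma \<theta> n b g"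
  proof
    fix v assume "v \<in> sigma \<theta> n b g'"
    then obtain r where r: "r \<in> polys_below (degree h')" "v = coeff (r \<star> g')"
      by (auto simp: sigma_eq_image[OF fac'])
    then have "v = coeff (rmod \<theta> n b ((r \<star> s) \<star> g))"
      using rmod_eq_self[OF degree_skew_mult_factor_less[OF fac' r(1)]] s
      by (simp add: skew_mult_assoc)
    then show "v \<in> sigma \<theta> n b g" using coeff_rmod_mem_sigma[OF fac] by simp
  qed
next
  assume sub: "sigma \<theta> n b g' \<subseteq> sigma \<theta> n b g"
  show "rdvd \<theta> g g'"
  proof (cases "degree h' = 0")
    case True
    then have "h' = 1" using assms(3) degree_0_id[of h'] by (simp add: one_pCons)
    then show ?thesis using fac fac' by (auto simp: rdvd_def)
  next
    case False
    then have "coeff (1 \<star> g') \<in> sigma \<theta> n b g'"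
      unfolding sigma_eq_image[OF fac'] by (intro imageI) (simp add: mem_polys_below_iff)
    then obtain r where "coeff g' = coeff (r \<star> g)"
      using sub unfolding sigma_eq_image[OF fac] by auto
    then show ?thesis by (auto simp: rdvd_def coeff_inject)
  qed
qed

lemma rdvd_iff_sigma_subset_Dset:
  assumes "g \<in> Dset \<theta> n b" "g' \<in> Dset \<theta> n b"
  shows "rdvd \<theta> g g' \<longleftrightarrow> sigma \<theta> n b g' \<subseteq> sigma \<theta> n b g"
proof -
  obtain h h' where fac: "xnb n b = h \<star> g" and fac': "xnb n b = h' \<star> g'"
    and "lead_coeff g' = 1"
    using assms by (auto simp: Dset_iff)
  then show ?thesis
    using rdvd_iff_sigma_subset[OF fac fac' factor_monic] by blast
qed

lemma Dset_rdvd_antisym: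
  assumes "g \<in> Dset \<theta> n b" "g' \<in> Dset \<theta> n b" "rdvd \<theta> g g'" "rdvd \<theta> g' g"
  shows "g = g'"
proof -
  obtain s t where s: "g' = s \<star> g" and t: "g = t \<star> g'"
    using assms(3,4) by (auto simp: rdvd_def)
  have monic: "lead_coeff g = 1" "lead_coeff g' = 1"
    using assms(1,2) by (auto simp: Dset_iff)
  have "degree g' \<le> degree g"
    using degree_skew_mult[of t g'] t monic skew_mult_eq_0_iff[of t g'] by fastforce
  then show ?thesis using monic_factor_eq[OF monic s] by simp
qed

lemma
  assumes "C \<in> Tset \<theta> n b"
  shows Tset_rmod_xnb: "coeff (rmod \<theta> n b (xnb n b)) \<in> C"
    and Tset_rmod_skew_mult: "coeff (rmod \<theta> n b f) \<in> C \<Longrightarrow> coeff (rmod \<theta> n b (s \<star> f)) \<in> C"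
    and Tset_rmod_diff:
      "coeff (rmod \<theta> n b f) \<in> C \<Longrightarrow> coeff (rmod \<theta> n b f') \<in> C \<Longrightarrow> coeff (rmod \<theta> n b (f - f')) \<in> C"
proof -
  have C: "(\<lambda>_. 0) \<in> C" "\<And>u v. u \<in> C \<Longrightarrow> v \<in> C \<Longrightarrow> (\<lambda>i. u i + v i) \<in> C"
    "\<And>c v. v \<in> C \<Longrightarrow> (\<lambda>i. c * v i) \<in> C"
    "\<And>v s. v \<in> C \<Longrightarrow> vec_of \<theta> n b (s \<star> poly_of_vec n v) \<in> C"
    using assms by (auto simp: Tset_def constacyclic_def lin_subspace_def)
  have "rmod \<theta> n b (xnb n b) = 0"
    by (rule rmod_eqI[of _ _ 1]) (use n_pos in auto)
  then show "coeff (rmod \<theta> n b (xnb n b)) \<in> C"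
    using C(1) by (simp add: zero_poly.rep_eq[symmetric])
  have "rmod \<theta> n b f \<in> polys_below n"
    using rmod_spec[of f] by (simp add: mem_polys_below_iff)
  then show "coeff (rmod \<theta> n b (s \<star> f)) \<in> C" if "coeff (rmod \<theta> n b f) \<in> C"
    using C(4)[OF that, of s]
    by (simp add: poly_of_vec_coeff vec_of_eq_coeff_rmod rmod_skew_mult_rmod)
  assume f: "coeff (rmod \<theta> n b f) \<in> C" and f': "coeff (rmod \<theta> n b f') \<in> C"
  have "coeff (rmod \<theta> n b (f - f'))
      = (\<lambda>i. coeff (rmod \<theta> n b f) i + (\<lambda>i. (-1) * coeff (rmod \<theta> n b f') i) i)"
    using rmod_add[of f "- f'"] rmod_smult[of "-1" f'] by (simp add: fun_eq_iff)
  then show "coeff (rmod \<theta> n b (f - f')) \<in> C"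
    using C(2)[OF f C(3)[OF f']] by (simp only:)
qed

text \<open>Every constacyclic code comes from the monic generator of the left ideal of polynomials whose
  residues lie in the code.\<close>
lemma Tset_eq_sigma:
  assumes C: "C \<in> Tset \<theta> n b"
  obtains g where "g \<in> Dset \<theta> n b" "C = sigma \<theta> n b g"
proof -
  define I where "I = {f. coeff (rmod \<theta> n b f) \<in> C}"
  obtain g where g: "lead_coeff g = 1" "g \<in> I" and gen: "\<And>f. f \<in> I \<Longrightarrow> \<exists>q. f = q \<star> g"
    by (rule left_ideal_monic_generator[of I "xnb n b"])
      (auto simp: I_def Tset_rmod_skew_mult[OF C] Tset_rmod_diff[OF C] Tset_rmod_xnb[OF C])
  obtain h where fac: "xnb n b = h \<star> g"
    using gen Tset_rmod_xnb[OF C] by (auto simp: I_def)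
  have "C = sigma \<theta> n b g"
  proof (intro equalityI subsetI)
    fix v assume "v \<in> C"
    define f where "f = poly_of_vec n v"
    have "v \<in> Fn n"
      using C \<open>v \<in> C\<close> by (auto simp: Tset_def constacyclic_def lin_subspace_def)
    then have "coeff f = v"
      by (auto simp: f_def coeff_poly_of_vec Fn_def)
    moreover have "rmod \<theta> n b f = f"
      using n_pos by (intro rmod_eq_self) (auto simp: f_def coeff_poly_of_vec intro!: degree_lessI)
    ultimately have "f \<in> I"
      using \<open>v \<in> C\<close> by (simp add: I_def)
    then obtain q where "f = q \<star> g"
      using gen by blast
    then show "v \<in> sigma \<theta> n b g"
      using coeff_rmod_mem_sigma[OF fac, of q] \<open>rmod \<theta> n b f = f\<close> \<open>coeff f = v\<close> by simp
  next
    fix v assume "v \<in> sigma \<theta> n b g"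
    then obtain r where r: "r \<in> polys_below (degree h)" "v = coeff (r \<star> g)"
      by (auto simp: sigma_eq_image[OF fac])
    have "coeff (rmod \<theta> n b (r \<star> g)) \<in> C"
      using Tset_rmod_skew_mult[OF C] g(2) by (simp add: I_def)
    then show "v \<in> C"
      using r rmod_eq_self[OF degree_skew_mult_factor_less[OF fac r(1)]] by simp
  qed
  then show ?thesis using that g(1) fac by (auto simp: Dset_iff)
qed

lemma bij_betw_sigma: "bij_betw (sigma \<theta> n b) (Dset \<theta> n b) (Tset \<theta> n b)"
proof (rule bij_betw_imageI)
  show "inj_on (sigma \<theta> n b) (Dset \<theta> n b)"
  proof (rule inj_onI)
    fix g g' assume g: "g \<in> Dset \<theta> n b" and g': "g' \<in> Dset \<theta> n b"
      and eq: "sigma \<theta> n b g = sigma \<theta> n b g'"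
    have "rdvd \<theta> g g'" "rdvd \<theta> g' g"
      using rdvd_iff_sigma_subset_Dset[OF g g'] rdvd_iff_sigma_subset_Dset[OF g' g] eq by auto
    then show "g = g'" by (rule Dset_rdvd_antisym[OF g g'])
  qed
  show "sigma \<theta> n b ` Dset \<theta> n b = Tset \<theta> n b"
  proof (intro equalityI subsetI)
    fix C assume "C \<in> Tset \<theta> n b"
    then obtain g where "g \<in> Dset \<theta> n b" "C = sigma \<theta> n b g"
      by (rule Tset_eq_sigma)
    then show "C \<in> sigma \<theta> n b ` Dset \<theta> n b" by blast
  qed (auto simp: Dset_iff intro: sigma_mem_Tset)
qed

lemma anti_iso_sigma: "anti_iso (Dset \<theta> n b) (rdvd \<theta>) (Tset \<theta> n b) (\<subseteq>) (sigma \<theta> n b)"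
  by (rule anti_isoI[OF bij_betw_sigma]) (rule rdvd_iff_sigma_subset_Dset)

end

section \<open>Reversal and inverse twists\<close>

context skew_poly_ring
begin

lemma coeff_skew_mult_linear:
  assumes "r \<in> polys_below d"
  shows "coeff (r \<star> f) l = (\<Sum>i<d. coeff r i * coeff (monom 1 i \<star> f) l)"
proof -
  have "r \<star> f = poly_of_vec d (coeff r) \<star> f"
    by (simp only: poly_of_vec_coeff[OF assms])
  also have "\<dots> = (\<Sum>i<d. smult (coeff r i) (monom 1 i \<star> f))"
    unfolding poly_of_vec_def skew_mult_sum_left by (intro sum.cong refl monom_skew_mult)
  finally have "r \<star> f = (\<Sum>i<d. smult (coeff r i) (monom 1 i \<star> f))" .
  then show ?thesis by (simp add: coeff_sum)
qed

lemma coeff_rho_l: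
  "coeff (rho_l \<theta> f) t = (if t \<le> degree f then \<Theta> t (coeff f (degree f - t)) else 0)"
proof -
  have "coeff (rho_l \<theta> f) t
      = (\<Sum>i\<le>degree f. if i = t then \<Theta> t (coeff f (degree f - t)) else 0)"
    unfolding rho_l_def coeff_sum by (rule sum.cong) simp_all
  then show ?thesis by simp
qed

lemma degree_rho_l:
  assumes "coeff f 0 \<noteq> 0"
  shows "degree (rho_l \<theta> f) = degree f"
proof (rule order.antisym)
  show "degree (rho_l \<theta> f) \<le> degree f"
    by (auto intro!: degree_le simp: coeff_rho_l)
  show "degree f \<le> degree (rho_l \<theta> f)"
    using assms by (intro le_degree) (simp add: coeff_rho_l)
qed

lemma rho_l_map_poly: "rho_l \<theta> (map_poly (\<Theta> e) f) = map_poly (\<Theta> e) (rho_l \<theta> f)"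
  by (rule poly_eqI) (simp add: coeff_rho_l coeff_map_poly degree_map_poly aut_pow_aut_pow add.commute)

lemma coeff_rho_l_skew_mult:
  assumes f0: "f \<noteq> 0" and g0: "g \<noteq> 0" and k: "k \<le> degree f + degree g"
  shows "coeff (rho_l \<theta> (f \<star> g)) k = (\<Sum>a\<in>{a. a \<le> k \<and> a \<le> degree g \<and> k \<le> a + degree f}.
    \<Theta> k (coeff f (degree f + a - k)) * \<Theta> (degree f + a) (coeff g (degree g - a)))"
proof -
  define t where "t = degree f"
  define s where "s = degree g"
  define H where "H i = \<Theta> k (coeff f i) * \<Theta> (k + i) (coeff g (t + s - k - i))" for i
  have "coeff (rho_l \<theta> (f \<star> g)) k = (\<Sum>i\<le>t + s - k. H i)"
    using k by (simp add: coeff_rho_l degree_skew_mult[OF f0 g0] coeff_skew_mult aut_pow_sum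
        aut_pow_mult aut_pow_aut_pow H_def t_def s_def)
  also have "\<dots> = (\<Sum>i\<in>{i. i \<le> t + s - k \<and> i \<le> t \<and> t \<le> i + k}. H i)"
  proof (intro sum.mono_neutral_right ballI)
    fix i assume "i \<in> {..t + s - k} - {i. i \<le> t + s - k \<and> i \<le> t \<and> t \<le> i + k}"
    then have "i > t \<or> t + s - k - i > s" by auto
    then show "H i = 0" by (auto simp: H_def coeff_eq_0 t_def s_def)
  qed auto
  also have "\<dots> = (\<Sum>a\<in>{a. a \<le> k \<and> a \<le> s \<and> k \<le> a + t}.
      \<Theta> k (coeff f (t + a - k)) * \<Theta> (t + a) (coeff g (s - a)))"
  proof (rule sum.reindex_bij_witness[where i = "\<lambda>a. t + a - k" and j = "\<lambda>i. i + k - t"])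
    fix i assume "i \<in> {i. i \<le> t + s - k \<and> i \<le> t \<and> t \<le> i + k}"
    then have "t + s - k - i = s - (i + k - t)" "k + i = t + (i + k - t)" using k by (auto simp: t_def s_def)
    then show "\<Theta> k (coeff f (t + (i + k - t) - k)) * \<Theta> (t + (i + k - t)) (coeff g (s - (i + k - t)))
        = H i"
      by (simp add: H_def)
  qed (use k in \<open>auto simp: t_def s_def\<close>)
  finally show ?thesis by (simp add: t_def s_def)
qed

lemma rho_l_skew_mult:
  assumes f0: "f \<noteq> 0" and g0: "g \<noteq> 0"
  shows "rho_l \<theta> (f \<star> g) = map_poly (\<Theta> (degree f)) (rho_l \<theta> g) \<star> rho_l \<theta> f"
proof (rule poly_eqI)
  fix k
  define t where "t = degree f"
  define s where "s = degree g"
  define G where "G a = \<Theta> k (coeff f (t + a - k)) * \<Theta> (t + a) (coeff g (s - a))" for a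
  have "coeff (map_poly (\<Theta> t) (rho_l \<theta> g) \<star> rho_l \<theta> f) k
      = (\<Sum>a\<le>k. if a \<le> s \<and> k \<le> a + t then G a else 0)"
    unfolding coeff_skew_mult
  proof (rule sum.cong[OF refl])
    fix a assume a: "a \<in> {..k}"
    show "coeff (map_poly (\<Theta> t) (rho_l \<theta> g)) a * \<Theta> a (coeff (rho_l \<theta> f) (k - a)) =
         (if a \<le> s \<and> k \<le> a + t then G a else 0)"
      using a by (auto simp: coeff_rho_l coeff_map_poly G_def aut_pow_aut_pow s_def t_def
          mult.commute add.commute intro!: arg_cong2[where f = "(*)"]
          arg_cong[where f = "\<lambda>x. \<Theta> x _"] arg_cong[where f = "coeff f"])
  qed
  also have "\<dots> = coeff (rho_l \<theta> (f \<star> g)) k"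
  proof (cases "k \<le> t + s")
    case True
    then show ?thesis
      using coeff_rho_l_skew_mult[OF f0 g0] by (simp add: sum.If_cases G_def t_def s_def Collect_conj_eq
          Int_commute atMost_def)
  next
    case False
    then show ?thesis
      by (auto simp: coeff_rho_l degree_skew_mult[OF f0 g0] t_def s_def intro!: sum.neutral)
  qed
  finally show "coeff (rho_l \<theta> (f \<star> g)) k = coeff (map_poly (\<Theta> t) (rho_l \<theta> g) \<star> rho_l \<theta> f) k"
    by (simp add: t_def)
qed

lemma aut_pow_inv_aut_pow: "\<Theta> m ((inv \<theta> ^^ (m + d)) x) = (inv \<theta> ^^ d) x"
  using fn_o_inv_fn_is_id[of \<theta> m] field_aut by (simp add: funpow_add field_aut_def fun_eq_iff)

lemma inv_aut_pow_aut_pow: "(inv \<theta> ^^ k) (\<Theta> k x) = x"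
  using inv_fn_o_fn_is_id[of \<theta> k] field_aut by (simp add: field_aut_def fun_eq_iff)

end

lemma rowspace_scale:
  fixes M :: "nat \<Rightarrow> nat \<Rightarrow> 'a::field"
  assumes "\<And>i. t i \<noteq> 0"
  shows "rowspace n (\<lambda>i j. t i * M i j) = rowspace n M"
proof (intro equalityI subsetI)
  fix v assume "v \<in> rowspace n (\<lambda>i j. t i * M i j)"
  then obtain c where "v = (\<lambda>j. \<Sum>i<n. (c i * t i) * M i j)"
    by (auto simp: rowspace_def mult.assoc)
  then show "v \<in> rowspace n M" by (auto simp: rowspace_def)
next
  fix v assume "v \<in> rowspace n M"
  then obtain c where v: "v = (\<lambda>j. \<Sum>i<n. c i * M i j)"
    by (auto simp: rowspace_def)
  show "v \<in> rowspace n (\<lambda>i j. t i * M i j)"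
    unfolding rowspace_def v by (intro CollectI exI[of _ "\<lambda>i. c i / t i"]) (use assms in simp)
qed

context skew_constacyclic
begin

lemma sigma_smult:
  assumes "c \<noteq> 0"
  shows "sigma \<theta> n b (smult c f) = sigma \<theta> n b f"
proof -
  have "circ \<theta> n b (smult c f) = (\<lambda>i j. \<Theta> i c * circ \<theta> n b f i j)"
    by (simp add: circ_def fun_eq_iff monom_skew_mult_smult vec_of_eq_coeff_rmod rmod_smult)
  then show ?thesis
    using assms by (simp add: sigma_def rowspace_scale)
qed

lemma rho_l_xnb: "rho_l \<theta> (xnb n b) = monom (- \<Theta> n b) n + 1"
  using n_pos by (intro poly_eqI) (auto simp: coeff_rho_l coeff_xnb aut_pow_minus)

lemma cofactor_eq:
  assumes "xnb n b = h \<star> g"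
  shows "cofactor \<theta> n b g = h"
  unfolding cofactor_def
proof (rule the_equality)
  show "h' = h" if "xnb n b = h' \<star> g" for h'
    using skew_mult_right_cancel[OF factor_nonzero(2)[OF assms]] that assms by simp
qed (rule assms)

end

locale finite_skew_poly_ring = skew_poly_ring \<theta> for \<theta> :: "'a::{field,finite} \<Rightarrow> 'a"
begin

lemma aut_pow_eq_id_exists: "\<exists>N>0. \<theta> ^^ N = id"
proof -
  have "\<not> inj (\<lambda>k::nat. \<theta> ^^ k)"
    using finite_imageD[of "\<lambda>k::nat. \<theta> ^^ k" UNIV] by auto
  then obtain i j :: nat where ij: "i < j" "\<Theta> i = \<Theta> j"
    unfolding inj_def by (metis linorder_neqE_nat)
  have "\<Theta> i (\<Theta> (j - i) x) = \<Theta> i x" for x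
  proof -
    have "\<Theta> i (\<Theta> (j - i) x) = \<Theta> j x"
      using ij(1) by (simp add: aut_pow_aut_pow)
    then show ?thesis using ij(2) by simp
  qed
  then have "\<Theta> (j - i) = id" by (auto simp: fun_eq_iff intro: aut_pow_inj)
  then show ?thesis using ij(1) by (intro exI[of _ "j - i"]) auto
qed

definition aut_order :: nat where
  "aut_order = (SOME N. 0 < N \<and> \<theta> ^^ N = id)"

lemma aut_order_pos: "0 < aut_order"
  and aut_pow_aut_order: "\<Theta> aut_order = id"
  using someI_ex[OF aut_pow_eq_id_exists] unfolding aut_order_def by auto

text \<open>On a finite field theta^(-1) is a power of theta, so twists by theta^(-n) inherit the
  lemmas about powers of theta.\<close>
lemma inv_aut_pow: "inv \<theta> ^^ k = \<Theta> ((aut_order - 1) * k)"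
proof -
  have "\<theta> \<circ> \<Theta> (aut_order - 1) = id"
    using aut_order_pos aut_pow_aut_order funpow.simps(2)[where f = \<theta> and n = "aut_order - 1"] by simp
  then have "inv \<theta> = (inv \<theta> \<circ> \<theta>) \<circ> \<Theta> (aut_order - 1)"
    by (simp add: comp_assoc)
  then have "inv \<theta> = \<Theta> (aut_order - 1)"
    by (simp add: inv_o_cancel[OF inj_aut])
  then show ?thesis by (simp add: funpow_mult)
qed

lemma inv_aut_pow_eq_0_iff [simp]: "(inv \<theta> ^^ k) x = 0 \<longleftrightarrow> x = 0"
  and inv_aut_pow_1 [simp]: "(inv \<theta> ^^ k) 1 = 1"
  and inv_aut_pow_minus: "(inv \<theta> ^^ k) (- x) = - (inv \<theta> ^^ k) x"
  and inv_aut_pow_mult: "(inv \<theta> ^^ k) (x * y) = (inv \<theta> ^^ k) x * (inv \<theta> ^^ k) y"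
  by (simp_all add: inv_aut_pow aut_pow_minus aut_pow_mult)

lemma coeff_map_inv_aut_pow [simp]:
  "coeff (map_poly (inv \<theta> ^^ k) f) i = (inv \<theta> ^^ k) (coeff f i)"
  by (simp add: coeff_map_poly)

lemma degree_map_inv_aut_pow [simp]: "degree (map_poly (inv \<theta> ^^ k) f) = degree f"
  by (simp add: inv_aut_pow degree_map_poly)

lemma coeff_hhat:
  "coeff (hhat \<theta> n h) t
    = (if t \<le> degree h then \<Theta> t (coeff (map_poly (inv \<theta> ^^ n) h) (degree h - t)) else 0)"
  by (simp add: hhat_def coeff_rho_l)

lemma degree_hhat: "coeff h 0 \<noteq> 0 \<Longrightarrow> degree (hhat \<theta> n h) = degree h"
  unfolding hhat_def by (subst degree_rho_l) simp_all

lemma coeff_monom_skew_mult_hhat: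
  "coeff (monom 1 i \<star> hhat \<theta> n h) l = (if i \<le> l \<and> l \<le> degree h + i
    then \<Theta> l (coeff (map_poly (inv \<theta> ^^ n) h) (degree h + i - l)) else 0)"
proof (cases "i \<le> l \<and> l \<le> degree h + i")
  case True
  then have "degree h - (l - i) = degree h + i - l" "i + (l - i) = l" by auto
  then show ?thesis
    using True by (auto simp: coeff_skew_mult_monom coeff_hhat aut_pow_aut_pow)
qed (auto simp: coeff_skew_mult_monom coeff_hhat)

end

lemma sum_bilinear_eq_0:
  fixes A B :: "nat \<Rightarrow> nat \<Rightarrow> 'a::comm_ring"
  assumes "\<And>i j. i < d \<Longrightarrow> j < m \<Longrightarrow> (\<Sum>l<n. A i l * B j l) = 0"
  shows "(\<Sum>l<n. (\<Sum>i<d. a i * A i l) * (\<Sum>j<m. c j * B j l)) = 0"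
proof -
  have "(\<Sum>l<n. (\<Sum>i<d. a i * A i l) * (\<Sum>j<m. c j * B j l))
      = (\<Sum>l<n. \<Sum>i<d. \<Sum>j<m. (a i * c j) * (A i l * B j l))"
    by (simp add: sum_product mult_ac)
  also have "\<dots> = (\<Sum>i<d. \<Sum>l<n. \<Sum>j<m. (a i * c j) * (A i l * B j l))"
    by (rule sum.swap)
  also have "\<dots> = (\<Sum>i<d. \<Sum>j<m. \<Sum>l<n. (a i * c j) * (A i l * B j l))"
    by (intro sum.cong refl sum.swap)
  also have "\<dots> = (\<Sum>i<d. \<Sum>j<m. (a i * c j) * (\<Sum>l<n. A i l * B j l))"
    by (simp add: sum_distrib_left)
  finally show ?thesis using assms by simp
qed

section \<open>The dual code\<close>

locale finite_skew_constacyclic = skew_constacyclic \<theta> n b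
  for \<theta> :: "'a::{field,finite} \<Rightarrow> 'a" and n b

sublocale finite_skew_constacyclic \<subseteq> finite_skew_poly_ring ..

context finite_skew_constacyclic
begin

text \<open>For p = theta^(-n)(h) we have x^n p = h x^n, so h g = x^n - b gives h (g p - x^n) = - b p;
  comparing degrees, g p - x^n is a constant.\<close>
lemma skew_mult_twisted_cofactor:
  assumes fac: "xnb n b = h \<star> g"
  obtains c where "g \<star> map_poly (inv \<theta> ^^ n) h = monom 1 n + [:c:]"
proof -
  define p where "p = map_poly (inv \<theta> ^^ n) h"
  have "map_poly (\<Theta> n) p = h"
    using aut_pow_inv_aut_pow[of n 0] by (intro poly_eqI) (simp add: p_def coeff_map_poly)
  then have "h \<star> (g \<star> p) = h \<star> monom 1 n - smult b p"
    by (simp flip: skew_mult_assoc fac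
        add: xnb_def skew_mult_diff_left skew_mult_const_left monom_skew_mult_commute)
  then have eq: "h \<star> (g \<star> p - monom 1 n) = - smult b p"
    by (simp add: skew_mult_diff_right)
  have "degree (g \<star> p - monom 1 n) = 0"
  proof (cases "g \<star> p - monom 1 n = 0")
    case False
    then show ?thesis
      using arg_cong[OF eq, of degree] degree_skew_mult[OF factor_nonzero(1)[OF fac] False]
        b_nonzero by (simp add: p_def)
  qed simp
  then have "g \<star> p = monom 1 n + [:coeff (g \<star> p - monom 1 n) 0:]"
    using degree_0_id[of "g \<star> p - monom 1 n"] by (simp add: algebra_simps)
  then show ?thesis using that p_def by blast
qed

lemma coeff_skew_mult_twisted_cofactor:
  assumes "xnb n b = h \<star> g" "0 < k" "k < n"
  shows "coeff (g \<star> map_poly (inv \<theta> ^^ n) h) k = 0"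
proof -
  obtain c where "g \<star> map_poly (inv \<theta> ^^ n) h = monom 1 n + [:c:]"
    by (rule skew_mult_twisted_cofactor[OF assms(1)])
  then show ?thesis using assms(2,3) by (cases k) simp_all
qed

lemma circ_rows_orthogonal:
  assumes fac: "xnb n b = h \<star> g" and i: "i < degree g" and j: "j < degree h"
  shows "(\<Sum>l<n. coeff (monom 1 i \<star> hhat \<theta> n h) l * coeff (monom 1 j \<star> g) l) = 0"
proof -
  define p where "p = map_poly (inv \<theta> ^^ n) h"
  define m where "m = degree h"
  define k where "k = m + i - j"
  define F where "F q = \<Theta> j (coeff g q * \<Theta> q (coeff p (k - q)))" for q
  have jm: "j < m" using j by (simp add: m_def)
  have "n = m + degree g" using factor_degree[OF fac] by (simp add: m_def)
  then have k: "0 < k" "k < n" "k + j < n" using i jm by (auto simp: k_def)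
  note hhat_row = coeff_monom_skew_mult_hhat[of i n h, folded m_def p_def]
  have g_row: "coeff (monom 1 j \<star> g) l = (if j \<le> l then \<Theta> j (coeff g (l - j)) else 0)" for l
    by (simp add: coeff_skew_mult_monom)
  have "coeff (monom 1 i \<star> hhat \<theta> n h) l * coeff (monom 1 j \<star> g) l
      = (if l \<in> {j..k + j} then F (l - j) else 0)" for l
  proof (cases "j \<le> l \<and> l \<le> k + j")
    case True
    then have "j + (l - j) = l" "k - (l - j) = m + i - l" using jm by (auto simp: k_def)
    moreover have "coeff p (m + i - l) = 0" if "l < i"
      using that by (simp add: coeff_eq_0 p_def m_def)
    ultimately show ?thesis
      using True jm unfolding hhat_row g_row
      by (auto simp: F_def k_def aut_pow_mult aut_pow_aut_pow mult.commute)
  qed (unfold hhat_row g_row, auto simp: k_def)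
  then have "(\<Sum>l<n. coeff (monom 1 i \<star> hhat \<theta> n h) l * coeff (monom 1 j \<star> g) l)
      = (\<Sum>l\<in>{..<n} \<inter> {j..k + j}. F (l - j))"
    by (simp add: sum.inter_restrict)
  also have "{..<n} \<inter> {j..k + j} = {0 + j..k + j}"
    using k(3) by auto
  also have "(\<Sum>l\<in>{0 + j..k + j}. F (l - j)) = \<Theta> j (coeff (g \<star> p) k)"
    by (simp only: sum.shift_bounds_cl_nat_ivl) (simp add: F_def coeff_skew_mult aut_pow_sum
        atLeast0AtMost)
  also have "\<dots> = 0"
    using coeff_skew_mult_twisted_cofactor[OF fac k(1,2)] by (simp add: p_def)
  finally show ?thesis .
qed

lemma skew_mult_hhat_orthogonal:
  assumes "xnb n b = h \<star> g" "r \<in> polys_below (degree g)" "s \<in> polys_below (degree h)"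
  shows "(\<Sum>l<n. coeff (r \<star> hhat \<theta> n h) l * coeff (s \<star> g) l) = 0"
  unfolding coeff_skew_mult_linear[OF assms(2)] coeff_skew_mult_linear[OF assms(3)]
  by (rule sum_bilinear_eq_0) (rule circ_rows_orthogonal[OF assms(1)])

lemma finite_skew_constacyclic_inverse: "finite_skew_constacyclic \<theta> n (inverse b)"
  by unfold_locales (use n_pos b_nonzero in auto)

context
  fixes g h
  assumes monic: "lead_coeff g = 1" and fac: "xnb n b = h \<star> g"
begin

lemma lead_coeff_hhat: "lead_coeff (hhat \<theta> n h) = (inv \<theta> ^^ degree g) (coeff h 0)"
  and lead_coeff_hhat_nonzero: "lead_coeff (hhat \<theta> n h) \<noteq> 0"
proof -
  have h0: "coeff h 0 \<noteq> 0" using factor_coeff_0[OF fac] b_nonzero by auto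
  have "lead_coeff (hhat \<theta> n h) = \<Theta> (degree h) ((inv \<theta> ^^ (degree h + degree g)) (coeff h 0))"
    by (simp add: degree_hhat[OF h0] coeff_hhat factor_degree[OF fac])
  also have "\<dots> = (inv \<theta> ^^ degree g) (coeff h 0)"
    by (rule aut_pow_inv_aut_pow)
  finally show "lead_coeff (hhat \<theta> n h) = (inv \<theta> ^^ degree g) (coeff h 0)" .
  with h0 show "lead_coeff (hhat \<theta> n h) \<noteq> 0" by simp
qed

lemma delta_eq_smult_hhat:
  "delta \<theta> n b g = smult (inverse (lead_coeff (hhat \<theta> n h))) (hhat \<theta> n h)"
proof -
  have "- inverse b * coeff g 0 * coeff h 0 = - inverse b * (coeff h 0 * coeff g 0)"
    by (simp only: mult.assoc mult.commute[of "coeff g 0"])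
  also have "\<dots> = 1"
    using factor_coeff_0[OF fac] b_nonzero by simp
  finally have "(inv \<theta> ^^ degree g) (- inverse b * coeff g 0) * lead_coeff (hhat \<theta> n h) = 1"
    by (simp only: lead_coeff_hhat flip: inv_aut_pow_mult) simp
  then have "(inv \<theta> ^^ degree g) (- inverse b * coeff g 0) = inverse (lead_coeff (hhat \<theta> n h))"
    by (metis inverse_unique mult.commute)
  then show ?thesis by (simp add: delta_def cofactor_eq[OF fac])
qed

lemma lead_coeff_delta: "lead_coeff (delta \<theta> n b g) = 1"
  and degree_delta: "degree (delta \<theta> n b g) = degree h"
proof -
  have "coeff h 0 \<noteq> 0" using factor_coeff_0[OF fac] b_nonzero by auto
  then show "lead_coeff (delta \<theta> n b g) = 1" and "degree (delta \<theta> n b g) = degree h"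
    using lead_coeff_hhat_nonzero by (simp_all add: delta_eq_smult_hhat degree_hhat)
qed

text \<open>Applying rho_l to x^n - b = h g and untwisting by theta^(-n) shows that hhat right divides
  1 - b x^n, an associate of x^n - b^(-1).\<close>
lemma delta_rdvd_xnb_inverse: "rdvd \<theta> (delta \<theta> n b g) (xnb n (inverse b))"
proof -
  define l where "l = lead_coeff (hhat \<theta> n h)"
  have "rho_l \<theta> (xnb n b) = map_poly (\<Theta> (degree h)) (rho_l \<theta> g) \<star> rho_l \<theta> h"
    using rho_l_skew_mult[OF factor_nonzero[OF fac]] fac by simp
  then have "map_poly (inv \<theta> ^^ n) (rho_l \<theta> (xnb n b))
      = map_poly (inv \<theta> ^^ n) (map_poly (\<Theta> (degree h)) (rho_l \<theta> g)) \<star> hhat \<theta> n h"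
    by (simp add: hhat_def inv_aut_pow map_poly_aut_pow_skew_mult rho_l_map_poly)
  moreover have "map_poly (inv \<theta> ^^ n) (rho_l \<theta> (xnb n b)) = monom (- b) n + 1"
    using n_pos by (intro poly_eqI)
      (auto simp: rho_l_xnb inv_aut_pow_minus inv_aut_pow_aut_pow)
  ultimately obtain w where w: "monom (- b) n + 1 = w \<star> hhat \<theta> n h" by metis
  have "xnb n (inverse b) = smult (- inverse b) (monom (- b) n + 1)"
    using b_nonzero n_pos
    by (intro poly_eqI) (auto simp: xnb_def coeff_pCons split: nat.splits)
  also have "\<dots> = (smult (- inverse b) w \<star> [:l:]) \<star> delta \<theta> n b g"
    using lead_coeff_hhat_nonzero
    by (simp add: w l_def delta_eq_smult_hhat skew_mult_smult_left skew_mult_minus_left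
        skew_mult_assoc skew_mult_const_left)
  finally show ?thesis by (auto simp: rdvd_def)
qed

text \<open>Testing against the rows x^j g, whose last nonzero entry is the 1 at position j + deg g,
  determines a vector of the dual code from its first deg g coordinates.\<close>
lemma dual_sigma_eqI:
  assumes u: "u \<in> dual n (sigma \<theta> n b g)" and w: "w \<in> dual n (sigma \<theta> n b g)"
    and prefix: "\<And>i. i < degree g \<Longrightarrow> u i = w i"
  shows "u = w"
proof -
  define z where "z i = u i - w i" for i
  have orth: "(\<Sum>l<n. z l * v l) = 0" if "v \<in> sigma \<theta> n b g" for v
    using u w that by (simp add: dual_def z_def left_diff_distrib sum_subtractf)
  have "z l = 0" for l
  proof (induction l rule: less_induct)
    case (less l)
    show ?case
    proof (cases "l < degree g \<or> n \<le> l")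
      case True
      then show ?thesis using prefix u w by (auto simp: z_def dual_def Fn_def)
    next
      case False
      define j where "j = l - degree g"
      have "j < degree h" using False factor_degree[OF fac] unfolding j_def by linarith
      then have "coeff (monom 1 j \<star> g) \<in> sigma \<theta> n b g"
        unfolding sigma_eq_image[OF fac] by (intro imageI) (simp add: mem_polys_below_iff degree_monom_eq)
      then have "(\<Sum>p<n. z p * coeff (monom 1 j \<star> g) p) = 0"
        by (rule orth)
      moreover have "z p * coeff (monom 1 j \<star> g) p = (if p = l then z l else 0)" for p
        using less[of p] False monic
        by (cases p l rule: linorder_cases) (auto simp: coeff_skew_mult_monom coeff_eq_0 j_def)
      ultimately show ?thesis using False by simp
    qed
  qed
  then show ?thesis by (auto simp: z_def)
qed

lemma sigma_delta_eq_image: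
  "sigma \<theta> n (inverse b) (delta \<theta> n b g) = (\<lambda>r. coeff (r \<star> delta \<theta> n b g)) ` polys_below (degree g)"
  and degree_skew_mult_delta_less:
  "r \<in> polys_below (degree g) \<Longrightarrow> degree (r \<star> delta \<theta> n b g) < n"
proof -
  interpret inv: finite_skew_constacyclic \<theta> n "inverse b"
    by (rule finite_skew_constacyclic_inverse)
  obtain w where w: "xnb n (inverse b) = w \<star> delta \<theta> n b g"
    using delta_rdvd_xnb_inverse by (auto simp: rdvd_def)
  have "degree w = degree g"
    using inv.factor_degree[OF w] factor_degree[OF fac] degree_delta by simp
  then show "sigma \<theta> n (inverse b) (delta \<theta> n b g)
      = (\<lambda>r. coeff (r \<star> delta \<theta> n b g)) ` polys_below (degree g)"
    and "r \<in> polys_below (degree g) \<Longrightarrow> degree (r \<star> delta \<theta> n b g) < n"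
    using inv.sigma_eq_image[OF w] inv.degree_skew_mult_factor_less[OF w] by simp_all
qed

lemma sigma_delta_subset_dual: "sigma \<theta> n (inverse b) (delta \<theta> n b g) \<subseteq> dual n (sigma \<theta> n b g)"
proof
  define c where "c = inverse (lead_coeff (hhat \<theta> n h))"
  fix u assume "u \<in> sigma \<theta> n (inverse b) (delta \<theta> n b g)"
  then obtain r where r: "r \<in> polys_below (degree g)" "u = coeff (r \<star> delta \<theta> n b g)"
    by (auto simp: sigma_delta_eq_image)
  have "u \<in> Fn n"
    using degree_skew_mult_delta_less[OF r(1)] r(2) by (auto simp: Fn_def coeff_eq_0)
  moreover have "r \<star> [:c:] \<in> polys_below (degree g)"
    using r(1) by (simp add: polys_below_def coeff_skew_mult_const_right)
  moreover have "u = coeff ((r \<star> [:c:]) \<star> hhat \<theta> n h)"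
    using r(2) by (simp add: delta_eq_smult_hhat skew_mult_assoc skew_mult_const_left c_def)
  ultimately show "u \<in> dual n (sigma \<theta> n b g)"
    using skew_mult_hhat_orthogonal[OF fac] by (auto simp: dual_def sigma_eq_image[OF fac])
qed

lemma card_dual_sigma_le: "card (dual n (sigma \<theta> n b g)) \<le> card (polys_below (degree g) :: 'a poly set)"
proof (rule card_inj_on_le)
  show "inj_on (poly_of_vec (degree g)) (dual n (sigma \<theta> n b g))"
  proof (rule inj_onI)
    fix u w assume "u \<in> dual n (sigma \<theta> n b g)" "w \<in> dual n (sigma \<theta> n b g)"
      and eq: "poly_of_vec (degree g) u = poly_of_vec (degree g) w"
    moreover have "u i = w i" if "i < degree g" for i
      using arg_cong[OF eq, of "\<lambda>p. coeff p i"] that by (simp add: coeff_poly_of_vec)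
    ultimately show "u = w" by (intro dual_sigma_eqI)
  qed
  show "poly_of_vec (degree g) ` dual n (sigma \<theta> n b g) \<subseteq> polys_below (degree g)"
    by (auto simp: polys_below_def coeff_poly_of_vec)
qed (rule finite_polys_below)

text \<open>The code of delta(g) is orthogonal to the code of g, and it is at least as large as the dual.\<close>
lemma sigma_delta_eq_dual: "sigma \<theta> n (inverse b) (delta \<theta> n b g) = dual n (sigma \<theta> n b g)"
proof (rule card_subset_eq[OF _ sigma_delta_subset_dual])
  show fin: "finite (dual n (sigma \<theta> n b g))"
    by (rule finite_subset[OF _ finite_Fn]) (auto simp: dual_def)
  have "delta \<theta> n b g \<noteq> 0" using lead_coeff_delta by auto
  then have "inj_on (\<lambda>r. coeff (r \<star> delta \<theta> n b g)) (polys_below (degree g))"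
    by (auto intro!: inj_onI dest: skew_mult_right_cancel simp: coeff_inject)
  then have "card (polys_below (degree g) :: 'a poly set) = card (sigma \<theta> n (inverse b) (delta \<theta> n b g))"
    by (simp add: sigma_delta_eq_image card_image)
  then show "card (sigma \<theta> n (inverse b) (delta \<theta> n b g)) = card (dual n (sigma \<theta> n b g))"
    using card_dual_sigma_le card_mono[OF fin sigma_delta_subset_dual] by linarith
qed

lemma sigma_hhat_eq_dual: "sigma \<theta> n (inverse b) (hhat \<theta> n h) = dual n (sigma \<theta> n b g)"
proof -
  interpret inv: finite_skew_constacyclic \<theta> n "inverse b"
    by (rule finite_skew_constacyclic_inverse)
  show ?thesis
    using inv.sigma_smult[of "inverse (lead_coeff (hhat \<theta> n h))"] lead_coeff_hhat_nonzero
      sigma_delta_eq_dual by (simp add: delta_eq_smult_hhat)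
qed

end

section \<open>Lattice anti-isomorphisms\<close>

lemma delta_mem_Dset: "g \<in> Dset \<theta> n b \<Longrightarrow> delta \<theta> n b g \<in> Dset \<theta> n (inverse b)"
  by (erule DsetE) (simp add: Dset_def delta_rdvd_xnb_inverse lead_coeff_delta)

lemma sigma_delta_eq_dual_Dset:
  "g \<in> Dset \<theta> n b \<Longrightarrow> sigma \<theta> n (inverse b) (delta \<theta> n b g) = dual n (sigma \<theta> n b g)"
  by (erule DsetE) (rule sigma_delta_eq_dual)

lemma degree_delta_Dset:
  assumes "g \<in> Dset \<theta> n b"
  shows "degree (delta \<theta> n b g) = n - degree g" and "degree g \<le> n"
proof -
  obtain h where "lead_coeff g = 1" and fac: "xnb n b = h \<star> g" using assms by (rule DsetE)
  then show "degree (delta \<theta> n b g) = n - degree g" and "degree g \<le> n"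
    using degree_delta[OF _ fac] factor_degree[OF fac] by simp_all
qed

lemma sigma_subset_dual_dual: "g \<in> Dset \<theta> n b \<Longrightarrow> sigma \<theta> n b g \<subseteq> dual n (dual n (sigma \<theta> n b g))"
  using bij_betw_apply[OF bij_betw_sigma, of g]
  by (intro subset_dual_dual) (simp add: Tset_def constacyclic_def lin_subspace_def)

text \<open>delta is an involution: delta(delta(g)) has the same degree as g and, having the code
  dual(dual(sigma g)) which contains sigma g, right divides g.\<close>
lemma delta_delta:
  assumes g: "g \<in> Dset \<theta> n b"
  shows "delta \<theta> n (inverse b) (delta \<theta> n b g) = g"
proof -
  interpret inv: finite_skew_constacyclic \<theta> n "inverse b"
    by (rule finite_skew_constacyclic_inverse)
  define g' where "g' = delta \<theta> n (inverse b) (delta \<theta> n b g)"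
  have g': "g' \<in> Dset \<theta> n b"
    using inv.delta_mem_Dset[OF delta_mem_Dset[OF g]] by (simp add: g'_def)
  have "sigma \<theta> n b g' = dual n (dual n (sigma \<theta> n b g))"
    using inv.sigma_delta_eq_dual_Dset[OF delta_mem_Dset[OF g]] sigma_delta_eq_dual_Dset[OF g]
    by (simp add: g'_def)
  then have "rdvd \<theta> g' g"
    using rdvd_iff_sigma_subset_Dset[OF g' g] sigma_subset_dual_dual[OF g] by simp
  then obtain s where s: "g = s \<star> g'" by (auto simp: rdvd_def)
  have "degree g' = degree g"
    using inv.degree_delta_Dset(1)[OF delta_mem_Dset[OF g]] degree_delta_Dset[OF g]
    by (simp add: g'_def)
  moreover have "lead_coeff g = 1" "lead_coeff g' = 1"
    using g g' by (auto simp: Dset_def)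
  ultimately have "g = g'"
    using monic_factor_eq[OF _ _ s] by simp
  then show ?thesis by (simp add: g'_def)
qed

lemma dual_dual_Tset: "C \<in> Tset \<theta> n b \<Longrightarrow> dual n (dual n C) = C"
proof -
  interpret inv: finite_skew_constacyclic \<theta> n "inverse b"
    by (rule finite_skew_constacyclic_inverse)
  assume "C \<in> Tset \<theta> n b"
  then obtain g where g: "g \<in> Dset \<theta> n b" and C: "C = sigma \<theta> n b g"
    by (rule Tset_eq_sigma)
  show ?thesis
    using inv.sigma_delta_eq_dual_Dset[OF delta_mem_Dset[OF g]] sigma_delta_eq_dual_Dset[OF g]
    by (simp add: C delta_delta[OF g])
qed

lemma dual_subset_dual_iff:
  assumes "C \<in> Tset \<theta> n b" "D \<in> Tset \<theta> n b"
  shows "dual n D \<subseteq> dual n C \<longleftrightarrow> C \<subseteq> D"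
  using dual_antimono[of "dual n D" "dual n C" n] dual_antimono[of C D n]
  by (auto simp: dual_dual_Tset[OF assms(1)] dual_dual_Tset[OF assms(2)])

lemma dual_mem_Tset: "C \<in> Tset \<theta> n b \<Longrightarrow> dual n C \<in> Tset \<theta> n (inverse b)"
proof -
  interpret inv: finite_skew_constacyclic \<theta> n "inverse b"
    by (rule finite_skew_constacyclic_inverse)
  assume "C \<in> Tset \<theta> n b"
  then obtain g where g: "g \<in> Dset \<theta> n b" and "C = sigma \<theta> n b g"
    by (rule Tset_eq_sigma)
  then show ?thesis
    using sigma_delta_eq_dual_Dset[OF g] bij_betw_apply[OF inv.bij_betw_sigma delta_mem_Dset[OF g]]
    by simp
qed

lemma anti_iso_dual: "anti_iso (Tset \<theta> n b) (\<subseteq>) (Tset \<theta> n (inverse b)) (\<subseteq>) (dual n)"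
proof (rule anti_isoI)
  interpret inv: finite_skew_constacyclic \<theta> n "inverse b"
    by (rule finite_skew_constacyclic_inverse)
  show "bij_betw (dual n) (Tset \<theta> n b) (Tset \<theta> n (inverse b))"
    using dual_mem_Tset dual_dual_Tset inv.dual_mem_Tset inv.dual_dual_Tset
    by (intro bij_betw_byWitness[where f' = "dual n"]) auto
  show "C \<subseteq> D \<longleftrightarrow> dual n D \<subseteq> dual n C" if "C \<in> Tset \<theta> n b" "D \<in> Tset \<theta> n b" for C D
    by (rule dual_subset_dual_iff[OF that, symmetric])
qed

lemma anti_iso_delta:
  "anti_iso (Dset \<theta> n b) (rdvd \<theta>) (Dset \<theta> n (inverse b)) (rdvd \<theta>) (delta \<theta> n b)"
proof (rule anti_isoI)
  interpret inv: finite_skew_constacyclic \<theta> n "inverse b"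
    by (rule finite_skew_constacyclic_inverse)
  show "bij_betw (delta \<theta> n b) (Dset \<theta> n b) (Dset \<theta> n (inverse b))"
    using delta_mem_Dset delta_delta inv.delta_mem_Dset inv.delta_delta
    by (intro bij_betw_byWitness[where f' = "delta \<theta> n (inverse b)"]) auto
  fix g g' assume g: "g \<in> Dset \<theta> n b" and g': "g' \<in> Dset \<theta> n b"
  have "rdvd \<theta> g g' \<longleftrightarrow> sigma \<theta> n b g' \<subseteq> sigma \<theta> n b g"
    by (rule rdvd_iff_sigma_subset_Dset[OF g g'])
  also have "\<dots> \<longleftrightarrow> dual n (sigma \<theta> n b g) \<subseteq> dual n (sigma \<theta> n b g')"
    using dual_subset_dual_iff[OF bij_betw_apply[OF bij_betw_sigma g'] bij_betw_apply[OF bij_betw_sigma g]]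
    by simp
  also have "\<dots> \<longleftrightarrow> rdvd \<theta> (delta \<theta> n b g') (delta \<theta> n b g)"
    using inv.rdvd_iff_sigma_subset_Dset[OF delta_mem_Dset[OF g'] delta_mem_Dset[OF g]]
    by (simp add: sigma_delta_eq_dual_Dset g g')
  finally show "rdvd \<theta> g g' \<longleftrightarrow> rdvd \<theta> (delta \<theta> n b g') (delta \<theta> n b g)" .
qed

end

theorem theorem6p3:
  fixes \<theta> :: "'a::{field,finite} \<Rightarrow> 'a" and n :: nat and a :: 'a
  assumes "field_aut \<theta>" and "n \<ge> 1" and "a \<noteq> 0"
  shows "(\<forall>g\<in>Dset \<theta> n a. delta \<theta> n a g \<in> Dset \<theta> n (inverse a))
    \<and> anti_iso (Dset \<theta> n a) (rdvd \<theta>) (Dset \<theta> n (inverse a)) (rdvd \<theta>) (delta \<theta> n a)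
    \<and> anti_iso (Dset \<theta> n a) (rdvd \<theta>) (Tset \<theta> n a) (\<subseteq>) (sigma \<theta> n a)
    \<and> anti_iso (Dset \<theta> n (inverse a)) (rdvd \<theta>) (Tset \<theta> n (inverse a)) (\<subseteq>) (sigma \<theta> n (inverse a))
    \<and> anti_iso (Tset \<theta> n a) (\<subseteq>) (Tset \<theta> n (inverse a)) (\<subseteq>) (dual n)
    \<and> (\<forall>g\<in>Dset \<theta> n a. sigma \<theta> n (inverse a) (delta \<theta> n a g) = dual n (sigma \<theta> n a g))
    \<and> (\<forall>g\<in>Dset \<theta> n a. \<forall>h. xnb n a = skew_mult \<theta> h g \<longrightarrow>
         dual n (sigma \<theta> n a g) = sigma \<theta> n (inverse a) (delta \<theta> n a g)
       \<and> dual n (sigma \<theta> n a g) = rowspace n (circ \<theta> n (inverse a) (hhat \<theta> n h)))"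
proof -
  interpret finite_skew_constacyclic \<theta> n a
    by unfold_locales (use assms in auto)
  interpret inv: finite_skew_constacyclic \<theta> n "inverse a"
    by (rule finite_skew_constacyclic_inverse)
  have "dual n (sigma \<theta> n a g) = rowspace n (circ \<theta> n (inverse a) (hhat \<theta> n h))"
    if "g \<in> Dset \<theta> n a" "xnb n a = h \<star> g" for g h
    using that sigma_hhat_eq_dual[of g h] by (auto simp: sigma_def elim: DsetE)
  then show ?thesis
    using delta_mem_Dset anti_iso_delta anti_iso_sigma inv.anti_iso_sigma anti_iso_dual
      sigma_delta_eq_dual_Dset by simp
qed

end
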